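(* Let $A\in\mathbb{R}^{n\times n}$ be symmetric positive definite with eigenvalues $0<\lambda_1\le\cdots\le\lambda_n$ and a corresponding orthonormal basis of eigenvectors $v_1,\dots,v_n$, let $c\in\mathbb{R}^n$, and consider the Barzilai--Borwein (BB) method applied to $\min_{x\in\mathbb{R}^n} f(x)=\frac12 x^\top Ax-c^\top x$, started from an arbitrary $x_0\in\mathbb{R}^n$. Let $g_k=Ax_k-c$ and write $g_k=\sum_{i=1}^n d_k^i v_i$. Then $$\left|d_{k+1}^i\right|\le \left|d_k^i\right|\cdot\max\left\{\frac{\lambda_i}{\lambda_1}-1,\ 1-\frac{\lambda_i}{\lambda_n}\right\}\quad\text{for all } k\ge 1,\ 1\le i\le n.$$ Moreover, if for some $k\ge 1$ and some index $i$ one of the following conditions holds: (1) $d_{k-1}^i$ is in the shrinking mode, i.e. $\sum_{j=1}^n(\lambda_j-\lambda_i)(d_{k-1}^j)^2\ge 0$; (2) $d_{k-1}^i$ is in the fluctuation mode, i.e. $\sum_{j=1}^n(\lambda_j-\lambda_i)(d_{k-1}^j)^2<0$, and $(d_{k-1}^i)^2\ge\sum_{j=1}^{i-1}(d_{k-1}^j)^2$; then $$\left|d_{k+1}^i\right|\le\left(1-\frac{1}{\kappa}\right)\left|d_k^i\right|,$$ where $\kappa=\lambda_n/\lambda_1$ is the condition number of $A$.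
   Context: The BB method for this problem: $x_1=x_0-\alpha_0 g_0$ with the exact line-search (steepest descent) step $\alpha_0=\frac{g_0^\top g_0}{g_0^\top A g_0}$, and for $k\ge1$, $x_{k+1}=x_k-\alpha_k g_k$ with $\alpha_k=\frac{s_{k-1}^\top s_{k-1}}{s_{k-1}^\top y_{k-1}}$, $s_{k-1}=x_k-x_{k-1}$, $y_{k-1}=g_k-g_{k-1}$; for this quadratic this equals $\alpha_k=\frac{g_{k-1}^\top g_{k-1}}{g_{k-1}^\top A g_{k-1}}$. Equivalently, the coefficients satisfy $d_1^i=d_0^i\cdot\frac{\sum_{j}(\lambda_j-\lambda_i)(d_0^j)^2}{\sum_j\lambda_j(d_0^j)^2}$ and $d_{k+1}^i=d_k^i\cdot\frac{\sum_{j}(\lambda_j-\lambda_i)(d_{k-1}^j)^2}{\sum_j\lambda_j(d_{k-1}^j)^2}$ for $k\ge1$. Convention: if some gradient vanishes, the method has reached the minimizer and all subsequent gradients (coefficients) are taken to be zero. *)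

theory Defs
  imports "HOL-Analysis.Analysis"
begin

text \<open>Gradient of f(x) = 1/2 x^T A x - c^T x, i.e. g = A x - c.\<close>
definition qgrad :: "real^'n^'n \<Rightarrow> real^'n \<Rightarrow> real^'n \<Rightarrow> real^'n" where
  "qgrad A c x = A *v x - c"

text \<open>First step: exact line search (steepest descent) step;
  afterwards alpha_k = s_{k-1}^T s_{k-1} / s_{k-1}^T y_{k-1}.
  Isabelle's convention x/0 = 0 realizes the stated convention: once a gradient vanishes,
  the iterate stays fixed and all subsequent gradients are zero.\<close>
fun bb_iter :: "real^'n^'n \<Rightarrow> real^'n \<Rightarrow> real^'n \<Rightarrow> nat \<Rightarrow> real^'n" where
  "bb_iter A c x0 0 = x0"
| "bb_iter A c x0 (Suc 0) =
     (let g0 = qgrad A c x0 in x0 - ((g0 \<bullet> g0) / (g0 \<bullet> (A *v g0))) *\<^sub>R g0)"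
| "bb_iter A c x0 (Suc (Suc k)) =
     (let xk1 = bb_iter A c x0 (Suc k); xk = bb_iter A c x0 k;
          s = xk1 - xk; y = qgrad A c xk1 - qgrad A c xk
      in xk1 - ((s \<bullet> s) / (s \<bullet> y)) *\<^sub>R qgrad A c xk1)"

definition bb_grad :: "real^'n^'n \<Rightarrow> real^'n \<Rightarrow> real^'n \<Rightarrow> nat \<Rightarrow> real^'n" where
  "bb_grad A c x0 k = qgrad A c (bb_iter A c x0 k)"

end

theory Submission
  imports Defs
begin

(* For a quadratic, the Barzilai-Borwein step is the exact line-search step of the previous
   gradient, 1 / rho(g_{k-1}) with rho the Rayleigh quotient of A.  Hence in the eigenbasis
   each coordinate evolves as d_{k+1}^i = (1 - lambda_i / rho(g_{k-1})) d_k^i, and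
   lambda_1 <= rho <= lambda_n confines this factor to [1 - lambda_i/lambda_1, 1 - lambda_i/lambda_n].
   In the shrinking mode rho >= lambda_i, so the factor lies in [0, 1 - 1/kappa].  In the
   fluctuation mode the excess lambda_i |g|^2 - g^T A g is carried by the coordinates j < i
   alone; if (d^i)^2 dominates their mass, the excess is at most
   (lambda_i - lambda_1) (d^i)^2 <= (1 - 1/kappa) g^T A g. *)

lemma orthonormal_family_expansion:
  fixes v :: "nat \<Rightarrow> 'a::euclidean_space"
  assumes orthonormal: "\<And>i j. i < DIM('a) \<Longrightarrow> j < DIM('a) \<Longrightarrow>
                          v i \<bullet> v j = (if i = j then 1 else 0)"
  shows "(\<Sum>j<DIM('a). (x \<bullet> v j) *\<^sub>R v j) = x"
proof -
  let ?B = "v ` {..<DIM('a)}"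
  have inj: "inj_on v {..<DIM('a)}"
    by (rule inj_onI) (metis orthonormal lessThan_iff one_neq_zero)
  have orth: "pairwise orthogonal ?B"
    unfolding pairwise_def orthogonal_def using orthonormal by fastforce
  have unit: "norm b = 1" if "b \<in> ?B" for b
    using that orthonormal by (auto simp: norm_eq_1)
  have "independent ?B"
    by (rule pairwise_orthogonal_independent[OF orth]) (use unit in force)
  then have "UNIV \<subseteq> span ?B"
    by (intro card_ge_dim_independent) (auto simp: card_image[OF inj])
  then have "(\<Sum>b\<in>?B. (x \<bullet> b) *\<^sub>R b) = x"
    by (intro orthonormal_basis_expand[OF orth unit]) auto
  then show ?thesis
    by (simp add: sum.reindex[OF inj])
qed

lemma orthonormal_family_inner:
  fixes v :: "nat \<Rightarrow> 'a::euclidean_space"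
  assumes "\<And>i j. i < DIM('a) \<Longrightarrow> j < DIM('a) \<Longrightarrow> v i \<bullet> v j = (if i = j then 1 else 0)"
  shows "x \<bullet> y = (\<Sum>j<DIM('a). (x \<bullet> v j) * (y \<bullet> v j))"
proof -
  have "x \<bullet> y = (\<Sum>j<DIM('a). (x \<bullet> v j) *\<^sub>R v j) \<bullet> y"
    by (simp only: orthonormal_family_expansion[OF assms])
  then show ?thesis
    by (simp add: inner_sum_left inner_commute[of "v _"])
qed

lemma symmetric_matrix_inner_commute:
  fixes A :: "real^'n^'n"
  assumes "transpose A = A"
  shows "(A *v x) \<bullet> y = x \<bullet> (A *v y)"
  by (metis assms dot_lmul_matrix vector_transpose_matrix)

lemma symmetric_matrix_inner_eigenvector:
  fixes A :: "real^'n^'n"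
  assumes "transpose A = A" and "A *v u = \<mu> *\<^sub>R u"
  shows "(A *v x) \<bullet> u = \<mu> * (x \<bullet> u)"
  by (simp add: symmetric_matrix_inner_commute[OF assms(1)] assms(2))

lemma orthonormal_family_inner_vec:
  fixes v :: "nat \<Rightarrow> real^'n"
  assumes "\<And>i j. i < CARD('n) \<Longrightarrow> j < CARD('n) \<Longrightarrow> v i \<bullet> v j = (if i = j then 1 else 0)"
  shows "x \<bullet> y = (\<Sum>j<CARD('n). (x \<bullet> v j) * (y \<bullet> v j))"
  using orthonormal_family_inner[of v x y, unfolded DIM_cart DIM_real mult_1_right, OF assms] .

lemma eigenbasis_quadratic_form:
  fixes A :: "real^'n^'n"
  assumes sym: "transpose A = A"
    and eig: "\<And>i. i < CARD('n) \<Longrightarrow> A *v v i = lam i *\<^sub>R v i"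
    and orthonormal: "\<And>i j. i < CARD('n) \<Longrightarrow> j < CARD('n) \<Longrightarrow>
                         v i \<bullet> v j = (if i = j then 1 else 0)"
  shows "x \<bullet> (A *v x) = (\<Sum>j<CARD('n). lam j * (x \<bullet> v j)\<^sup>2)"
proof -
  have "x \<bullet> (A *v x) = (\<Sum>j<CARD('n). (x \<bullet> v j) * ((A *v x) \<bullet> v j))"
    by (rule orthonormal_family_inner_vec[OF orthonormal])
  also have "\<dots> = (\<Sum>j<CARD('n). lam j * (x \<bullet> v j)\<^sup>2)"
    by (intro sum.cong) (simp_all add: symmetric_matrix_inner_eigenvector[OF sym] eig power2_eq_square)
  finally show ?thesis .
qed

lemma orthonormal_family_inner_self:
  fixes v :: "nat \<Rightarrow> real^'n"
  assumes "\<And>i j. i < CARD('n) \<Longrightarrow> j < CARD('n) \<Longrightarrow> v i \<bullet> v j = (if i = j then 1 else 0)"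
  shows "x \<bullet> x = (\<Sum>j<CARD('n). (x \<bullet> v j)\<^sup>2)"
  using orthonormal_family_inner_vec[OF assms, of x x] by (simp add: power2_eq_square)

definition cauchy_stepsize :: "real^'n^'n \<Rightarrow> real^'n \<Rightarrow> real" where
  "cauchy_stepsize A g = (g \<bullet> g) / (g \<bullet> (A *v g))"

lemma cauchy_stepsize_scaleR:
  "cauchy_stepsize A (t *\<^sub>R g) = (if t = 0 then 0 else cauchy_stepsize A g)"
  by (simp add: cauchy_stepsize_def matrix_vector_mult_scaleR)

lemma cauchy_stepsize_uminus [simp]: "cauchy_stepsize A (- g) = cauchy_stepsize A g"
  using cauchy_stepsize_scaleR[of A "- 1" g] by simp

lemma cauchy_stepsize_eq_0_iff:
  assumes "\<And>x. x \<noteq> 0 \<Longrightarrow> x \<bullet> (A *v x) > 0"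
  shows "cauchy_stepsize A g = 0 \<longleftrightarrow> g = 0"
  using assms[of g] by (cases "g = 0") (auto simp: cauchy_stepsize_def)

lemma cauchy_stepsize_rescaled:
  assumes posdef: "\<And>x. x \<noteq> 0 \<Longrightarrow> x \<bullet> (A *v x) > 0" and "g = 0 \<Longrightarrow> h = 0"
  shows "cauchy_stepsize A (cauchy_stepsize A g *\<^sub>R h) = cauchy_stepsize A h"
  using assms(2) by (auto simp: cauchy_stepsize_scaleR cauchy_stepsize_eq_0_iff[OF posdef])

lemma qgrad_diff: "qgrad A c x - qgrad A c y = A *v (x - y)"
  by (simp add: qgrad_def matrix_vector_mult_diff_distrib)

lemma qgrad_gradient_step:
  "qgrad A c (x - a *\<^sub>R qgrad A c x) = qgrad A c x - a *\<^sub>R (A *v qgrad A c x)"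
  by (simp add: qgrad_def matrix_vector_mult_diff_distrib matrix_vector_mult_scaleR algebra_simps)

lemma bb_iter_Suc_Suc_cauchy_stepsize:
  "bb_iter A c x0 (Suc (Suc k)) = bb_iter A c x0 (Suc k)
     - cauchy_stepsize A (bb_iter A c x0 (Suc k) - bb_iter A c x0 k) *\<^sub>R bb_grad A c x0 (Suc k)"
  by (simp add: Let_def cauchy_stepsize_def bb_grad_def qgrad_diff)

text \<open>For \<open>k = 0\<close> the index \<open>k - 1\<close> truncates to \<open>0\<close>, which matches the initial exact
  line search.\<close>

lemma bb_iter_Suc:
  assumes posdef: "\<And>x. x \<noteq> 0 \<Longrightarrow> x \<bullet> (A *v x) > 0"
  shows "bb_iter A c x0 (Suc k)
    = bb_iter A c x0 k - cauchy_stepsize A (bb_grad A c x0 (k - 1)) *\<^sub>R bb_grad A c x0 k"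
proof (induction k rule: induct_nat_012)
  case 0
  show ?case
    by (simp add: Let_def cauchy_stepsize_def bb_grad_def)
next
  case 1
  have "bb_iter A c x0 (Suc 0) - bb_iter A c x0 0
      = - (cauchy_stepsize A (bb_grad A c x0 0) *\<^sub>R bb_grad A c x0 0)"
    by (simp add: Let_def cauchy_stepsize_def bb_grad_def)
  then show ?case
    by (simp add: bb_iter_Suc_Suc_cauchy_stepsize cauchy_stepsize_rescaled[OF posdef]
        del: bb_iter.simps)
next
  case (ge2 n)
  let ?x = "bb_iter A c x0" and ?g = "bb_grad A c x0"
  have "?g n = 0 \<Longrightarrow> ?g (Suc n) = 0"
    using ge2.IH(1) qgrad_gradient_step unfolding bb_grad_def by simp
  moreover have "?x (Suc (Suc n)) - ?x (Suc n)
      = - (cauchy_stepsize A (?g n) *\<^sub>R ?g (Suc n))"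
    using ge2.IH(2) by simp
  ultimately show ?case
    using bb_iter_Suc_Suc_cauchy_stepsize[of A c x0 "Suc n"]
    by (simp add: cauchy_stepsize_rescaled[OF posdef] del: bb_iter.simps)
qed

lemma bb_grad_Suc:
  assumes "\<And>x. x \<noteq> 0 \<Longrightarrow> x \<bullet> (A *v x) > 0"
  shows "bb_grad A c x0 (Suc k)
    = bb_grad A c x0 k - cauchy_stepsize A (bb_grad A c x0 (k - 1)) *\<^sub>R (A *v bb_grad A c x0 k)"
  using bb_iter_Suc[OF assms, of c x0 k] qgrad_gradient_step unfolding bb_grad_def by simp

lemma weighted_sum_bounds:
  fixes lam w :: "nat \<Rightarrow> real"
  assumes "\<And>j. j < N \<Longrightarrow> 0 \<le> w j" and "\<And>j. j < N \<Longrightarrow> L \<le> lam j \<and> lam j \<le> U"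
  shows "L * (\<Sum>j<N. w j) \<le> (\<Sum>j<N. lam j * w j)"
    and "(\<Sum>j<N. lam j * w j) \<le> U * (\<Sum>j<N. w j)"
  unfolding sum_distrib_left
  by (intro sum_mono mult_right_mono; simp add: assms)+

lemma step_factor_bounds:
  fixes S T L U x :: real
  assumes "0 < L" and "0 < S" and "L * S \<le> T" and "T \<le> U * S" and "0 \<le> x"
  shows "1 - x / L \<le> 1 - S / T * x" and "1 - S / T * x \<le> 1 - x / U"
proof -
  have "0 < T"
    using mult_pos_pos[OF assms(1,2)] assms(3) by linarith
  then have "0 < U"
    using assms(2,4) zero_less_mult_pos2[of U S] by linarith
  have "S / T \<le> 1 / L" and "1 / U \<le> S / T"
    using \<open>0 < T\<close> \<open>0 < U\<close> assms by (simp_all add: field_simps)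
  then show "1 - x / L \<le> 1 - S / T * x" and "1 - S / T * x \<le> 1 - x / U"
    using mult_right_mono[OF _ \<open>0 \<le> x\<close>] by fastforce+
qed

lemma abs_step_factor_le_max:
  fixes lam w :: "nat \<Rightarrow> real"
  assumes "\<And>j. j < N \<Longrightarrow> 0 \<le> w j" and "\<And>j. j < N \<Longrightarrow> L \<le> lam j \<and> lam j \<le> U"
    and "0 < L" and "0 < (\<Sum>j<N. w j)" and "0 \<le> x"
  shows "\<bar>1 - (\<Sum>j<N. w j) / (\<Sum>j<N. lam j * w j) * x\<bar> \<le> max (x / L - 1) (1 - x / U)"
proof -
  have "L * (\<Sum>j<N. w j) \<le> (\<Sum>j<N. lam j * w j)" "(\<Sum>j<N. lam j * w j) \<le> U * (\<Sum>j<N. w j)"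
    by (rule weighted_sum_bounds[where L = L and U = U]; use assms in simp)+
  from step_factor_bounds[OF assms(3,4) this assms(5)] show ?thesis
    by argo
qed

lemma fluctuation_excess_le:
  fixes lam w :: "nat \<Rightarrow> real"
  assumes sorted: "\<And>i j. i \<le> j \<Longrightarrow> j < N \<Longrightarrow> lam i \<le> lam j"
    and pos: "0 < lam 0" and i: "i < N" and w: "\<And>j. j < N \<Longrightarrow> 0 \<le> w j"
    and dominant: "(\<Sum>j<i. w j) \<le> w i"
  shows "lam i * (\<Sum>j<N. w j) - (\<Sum>j<N. lam j * w j)
           \<le> (1 - lam 0 / lam (N - 1)) * (\<Sum>j<N. lam j * w j)"
proof -
  let ?L = "lam 0" and ?U = "lam (N - 1)"
  have "lam i * (\<Sum>j<N. w j) - (\<Sum>j<N. lam j * w j) = (\<Sum>j<N. (lam i - lam j) * w j)"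
    by (simp add: algebra_simps sum_subtractf sum_distrib_left)
  also have "\<dots> = (\<Sum>j<i. (lam i - lam j) * w j) + (\<Sum>j=i..<N. (lam i - lam j) * w j)"
    using i by (simp add: lessThan_atLeast0 sum.atLeastLessThan_concat)
  also have "(\<Sum>j=i..<N. (lam i - lam j) * w j) \<le> 0"
    by (intro sum_nonpos mult_nonpos_nonneg) (auto intro: sorted w)
  also have "(\<Sum>j<i. (lam i - lam j) * w j) \<le> (\<Sum>j<i. (lam i - ?L) * w j)"
    using i by (intro sum_mono mult_right_mono) (auto intro: sorted w)
  also have "\<dots> \<le> (lam i - ?L) * w i"
    using dominant sorted[of 0 i] i by (simp add: sum_distrib_left[symmetric] mult_left_mono)
  also have "\<dots> \<le> (1 - ?L / ?U) * (lam i * w i)"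
  proof -
    have "?L * lam i \<le> ?L * ?U"
      using sorted[of i "N - 1"] i pos by simp
    then have "lam i - ?L \<le> (1 - ?L / ?U) * lam i"
      using pos sorted[of 0 "N - 1"] i by (simp add: field_simps)
    then show ?thesis
      using w[OF i] by (metis mult.assoc mult_right_mono)
  qed
  also have "\<dots> \<le> (1 - ?L / ?U) * (\<Sum>j<N. lam j * w j)"
  proof (intro mult_left_mono member_le_sum)
    show "0 \<le> 1 - ?L / ?U"
      using pos sorted[of 0 "N - 1"] i by simp
    show "0 \<le> lam j * w j" if "j \<in> {..<N} - {i}" for j
      using that pos sorted[of 0 j] w[of j] by simp
  qed (use i in auto)
  finally show ?thesis by simp
qed

lemma abs_step_factor_le_contraction:
  fixes lam w :: "nat \<Rightarrow> real"
  assumes sorted: "\<And>i j. i \<le> j \<Longrightarrow> j < N \<Longrightarrow> lam i \<le> lam j"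
    and pos: "0 < lam 0" and i: "i < N" and w: "\<And>j. j < N \<Longrightarrow> 0 \<le> w j"
    and S_pos: "0 < (\<Sum>j<N. w j)"
    and mode: "0 \<le> (\<Sum>j<N. (lam j - lam i) * w j) \<or> (\<Sum>j<i. w j) \<le> w i"
  shows "\<bar>1 - (\<Sum>j<N. w j) / (\<Sum>j<N. lam j * w j) * lam i\<bar> \<le> 1 - lam 0 / lam (N - 1)"
proof -
  let ?S = "\<Sum>j<N. w j" and ?T = "\<Sum>j<N. lam j * w j"
  let ?L = "lam 0" and ?U = "lam (N - 1)"
  have range: "?L \<le> lam j \<and> lam j \<le> ?U" if "j < N" for j
    using sorted that by simp
  have bounds: "?L * ?S \<le> ?T" "?T \<le> ?U * ?S"
    by (rule weighted_sum_bounds[where L = ?L and U = ?U]; use w range in simp)+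
  have "0 \<le> lam i"
    using range[OF i] pos by simp
  note factor = step_factor_bounds[OF pos S_pos bounds this]
  have "0 < ?T"
    using mult_pos_pos[OF pos S_pos] bounds(1) by linarith
  have excess: "(\<Sum>j<N. (lam j - lam i) * w j) = ?T - lam i * ?S"
    by (simp add: algebra_simps sum_subtractf sum_distrib_left)
  have factor_eq: "1 - ?S / ?T * lam i = (?T - lam i * ?S) / ?T"
    using \<open>0 < ?T\<close> by (simp add: field_simps)
  show ?thesis
  proof (cases "0 \<le> ?T - lam i * ?S")
    case True
    then have "0 \<le> 1 - ?S / ?T * lam i"
      using \<open>0 < ?T\<close> factor_eq by simp
    moreover have "1 - lam i / ?U \<le> 1 - ?L / ?U"
      using range[OF i] sorted[of 0 "N - 1"] i pos by (simp add: divide_right_mono)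
    ultimately show ?thesis
      using factor(2) range[OF i] pos by simp
  next
    case False
    then have "(\<Sum>j<i. w j) \<le> w i"
      using mode excess by linarith
    then have "lam i * ?S - ?T \<le> (1 - ?L / ?U) * ?T"
      by (intro fluctuation_excess_le sorted pos i w)
    moreover have "\<bar>1 - ?S / ?T * lam i\<bar> = (lam i * ?S - ?T) / ?T"
      using False \<open>0 < ?T\<close> unfolding factor_eq by (simp add: abs_div_pos[symmetric])
    ultimately show ?thesis
      using \<open>0 < ?T\<close> by (simp add: pos_divide_le_eq)
  qed
qed

lemma bb_coord_Suc:
  fixes A :: "real^'n^'n"
  assumes sym: "transpose A = A"
    and posdef: "\<And>x. x \<noteq> 0 \<Longrightarrow> x \<bullet> (A *v x) > 0"
    and eig: "A *v u = \<mu> *\<^sub>R u"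
  shows "bb_grad A c x0 (Suc k) \<bullet> u
    = (1 - cauchy_stepsize A (bb_grad A c x0 (k - 1)) * \<mu>) * (bb_grad A c x0 k \<bullet> u)"
  by (simp add: bb_grad_Suc[OF posdef] inner_diff_left
      symmetric_matrix_inner_eigenvector[OF sym eig] algebra_simps)

lemma cauchy_stepsize_eigenbasis:
  fixes A :: "real^'n^'n"
  assumes sym: "transpose A = A"
    and eig: "\<And>i. i < CARD('n) \<Longrightarrow> A *v v i = lam i *\<^sub>R v i"
    and orthonormal: "\<And>i j. i < CARD('n) \<Longrightarrow> j < CARD('n) \<Longrightarrow>
                         v i \<bullet> v j = (if i = j then 1 else 0)"
  shows "cauchy_stepsize A g
    = (\<Sum>j<CARD('n). (g \<bullet> v j)\<^sup>2) / (\<Sum>j<CARD('n). lam j * (g \<bullet> v j)\<^sup>2)"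
  using eigenbasis_quadratic_form[OF sym eig orthonormal, of g]
    orthonormal_family_inner_self[OF orthonormal, of g]
  by (simp add: cauchy_stepsize_def)

lemma bb_coord_Suc_Suc_bounds:
  fixes A :: "real^'n^'n" and c x0 :: "real^'n"
  assumes sym: "transpose A = A"
    and posdef: "\<And>x. x \<noteq> 0 \<Longrightarrow> x \<bullet> (A *v x) > 0"
    and eig: "\<And>i. i < CARD('n) \<Longrightarrow> A *v v i = lam i *\<^sub>R v i"
    and orthonormal: "\<And>i j. i < CARD('n) \<Longrightarrow> j < CARD('n) \<Longrightarrow>
                         v i \<bullet> v j = (if i = j then 1 else 0)"
    and lam_pos: "0 < lam 0"
    and lam_sorted: "\<And>i j. i \<le> j \<Longrightarrow> j < CARD('n) \<Longrightarrow> lam i \<le> lam j"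
    and i: "i < CARD('n)"
  defines "d \<equiv> \<lambda>k j. bb_grad A c x0 k \<bullet> v j"
  shows "\<bar>d (Suc (Suc m)) i\<bar>
           \<le> \<bar>d (Suc m) i\<bar> * max (lam i / lam 0 - 1) (1 - lam i / lam (CARD('n) - 1))"
    and "0 \<le> (\<Sum>j<CARD('n). (lam j - lam i) * (d m j)\<^sup>2) \<or> (\<Sum>j<i. (d m j)\<^sup>2) \<le> (d m i)\<^sup>2
           \<Longrightarrow> \<bar>d (Suc (Suc m)) i\<bar> \<le> (1 - lam 0 / lam (CARD('n) - 1)) * \<bar>d (Suc m) i\<bar>"
proof -
  let ?N = "CARD('n)" and ?g = "bb_grad A c x0" and ?w = "\<lambda>j. (d m j)\<^sup>2"
  let ?f = "1 - (\<Sum>j<?N. ?w j) / (\<Sum>j<?N. lam j * ?w j) * lam i"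
  have step: "d (Suc (Suc m)) i = ?f * d (Suc m) i"
    unfolding d_def using bb_coord_Suc[OF sym posdef eig[OF i]]
    by (simp add: cauchy_stepsize_eigenbasis[OF sym eig orthonormal])
  have range: "lam 0 \<le> lam j \<and> lam j \<le> lam (?N - 1)" if "j < ?N" for j
    using lam_sorted that by simp
  consider "?g m = 0" | "0 < (\<Sum>j<?N. ?w j)"
    using orthonormal_family_inner_self[OF orthonormal, of "?g m"] unfolding d_def
    by (metis inner_gt_zero_iff)
  then have "\<bar>?f\<bar> \<le> max (lam i / lam 0 - 1) (1 - lam i / lam (?N - 1)) \<and>
      (0 \<le> (\<Sum>j<?N. (lam j - lam i) * ?w j) \<or> (\<Sum>j<i. ?w j) \<le> ?w i
        \<longrightarrow> \<bar>?f\<bar> \<le> 1 - lam 0 / lam (?N - 1)) \<or> d (Suc m) i = 0"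
  proof cases
    case 1
    then show ?thesis
      unfolding d_def by (simp add: bb_grad_Suc[OF posdef])
  next
    case 2
    have "0 \<le> lam i"
      using range[OF i] lam_pos by simp
    with 2 have "\<bar>?f\<bar> \<le> max (lam i / lam 0 - 1) (1 - lam i / lam (?N - 1))"
      using lam_pos range by (intro abs_step_factor_le_max) simp_all
    moreover from 2 have "0 \<le> (\<Sum>j<?N. (lam j - lam i) * ?w j) \<or> (\<Sum>j<i. ?w j) \<le> ?w i
        \<longrightarrow> \<bar>?f\<bar> \<le> 1 - lam 0 / lam (?N - 1)"
      using lam_sorted lam_pos i by (intro impI abs_step_factor_le_contraction) simp_all
    ultimately show ?thesis
      by blast
  qed
  then show "\<bar>d (Suc (Suc m)) i\<bar>
      \<le> \<bar>d (Suc m) i\<bar> * max (lam i / lam 0 - 1) (1 - lam i / lam (?N - 1))"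
    and "0 \<le> (\<Sum>j<?N. (lam j - lam i) * ?w j) \<or> (\<Sum>j<i. ?w j) \<le> ?w i
      \<Longrightarrow> \<bar>d (Suc (Suc m)) i\<bar> \<le> (1 - lam 0 / lam (?N - 1)) * \<bar>d (Suc m) i\<bar>"
    unfolding step abs_mult by (auto simp: mult.commute mult_left_mono)
qed

theorem proposition1:
  fixes A :: "real^'n^'n" and c x0 :: "real^'n"
    and lam :: "nat \<Rightarrow> real" and v :: "nat \<Rightarrow> real^'n"
  assumes sym: "transpose A = A"
    and posdef: "\<And>x. x \<noteq> 0 \<Longrightarrow> x \<bullet> (A *v x) > 0"
    and eig: "\<And>i. i < CARD('n) \<Longrightarrow> A *v v i = lam i *\<^sub>R v i"
    and orthonormal: "\<And>i j. i < CARD('n) \<Longrightarrow> j < CARD('n) \<Longrightarrow>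
                         v i \<bullet> v j = (if i = j then 1 else 0)"
    and lam_pos: "0 < lam 0"
    and lam_sorted: "\<And>i j. i \<le> j \<Longrightarrow> j < CARD('n) \<Longrightarrow> lam i \<le> lam j"
  defines "d \<equiv> (\<lambda>k i. bb_grad A c x0 k \<bullet> v i)"
    and "\<kappa> \<equiv> lam (CARD('n) - 1) / lam 0"
  shows "(\<forall>k\<ge>1. \<forall>i<CARD('n).
            \<bar>d (Suc k) i\<bar> \<le> \<bar>d k i\<bar> *
               max (lam i / lam 0 - 1) (1 - lam i / lam (CARD('n) - 1)))
       \<and> (\<forall>k\<ge>1. \<forall>i<CARD('n).
            ((\<Sum>j<CARD('n). (lam j - lam i) * (d (k - 1) j)\<^sup>2) \<ge> 0
             \<or> ((\<Sum>j<CARD('n). (lam j - lam i) * (d (k - 1) j)\<^sup>2) < 0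
                \<and> (d (k - 1) i)\<^sup>2 \<ge> (\<Sum>j<i. (d (k - 1) j)\<^sup>2)))
            \<longrightarrow> \<bar>d (Suc k) i\<bar> \<le> (1 - 1 / \<kappa>) * \<bar>d k i\<bar>)"
proof -
  have "\<bar>d (Suc k) i\<bar> \<le> \<bar>d k i\<bar> * max (lam i / lam 0 - 1) (1 - lam i / lam (CARD('n) - 1))
    \<and> (0 \<le> (\<Sum>j<CARD('n). (lam j - lam i) * (d (k - 1) j)\<^sup>2)
         \<or> (\<Sum>j<i. (d (k - 1) j)\<^sup>2) \<le> (d (k - 1) i)\<^sup>2
       \<longrightarrow> \<bar>d (Suc k) i\<bar> \<le> (1 - 1 / \<kappa>) * \<bar>d k i\<bar>)"
    if "1 \<le> k" and "i < CARD('n)" for k i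
  proof -
    obtain m where "k = Suc m"
      using \<open>1 \<le> k\<close> by (cases k) auto
    then show ?thesis
      using bb_coord_Suc_Suc_bounds[OF sym posdef eig orthonormal lam_pos lam_sorted \<open>i < CARD('n)\<close>]
      unfolding d_def \<kappa>_def by simp
  qed
  then show ?thesis
    by (meson less_imp_le)
qed

end
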